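(* Let $\beta=0$ and $\alpha=n/m$ with $n,m$ positive integers, $\gcd(n,m)=1$. For $p_0\in[0,1)$ let $\Lambda(\alpha,p_0)=\bigcup_{k=0}^{m-1}\{(q,(p_0+k\alpha)\bmod 1): q\in[0,1)\}$, a union of $m$ distinct horizontal circles. Then: (i) $\phi(\Lambda(\alpha,p_0))=\Lambda(\alpha,p_0)$ and $\phi$ restricted to $\Lambda(\alpha,p_0)$ is an interval exchange transformation, i.e. a bijection of $\Lambda(\alpha,p_0)$ for which there is a partition of $\Lambda(\alpha,p_0)$ into finitely many half-open horizontal segments such that on each segment $\phi(q,p)=(q+a,p+b)\pmod 1$ for constants $(a,b)$ depending on the segment; (ii) if $p_0\in\mathbb{Q}$ then there exists an integer $k=k(\alpha,p_0)\ge1$ such that $\phi^k$ restricted to $\Lambda(\alpha,p_0)$ is the identity; (iii) if $p_0\notin\mathbb{Q}$ then $\phi$ restricted to $\Lambda(\alpha,p_0)$ has no periodic points.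
   Context: $\mathbb{T}^2=[0,1)^2$ with addition modulo 1. Define $\theta(q)=1$ for $q\in[0,\tfrac12)$ and $\theta(q)=-1$ for $q\in[\tfrac12,1)$. The triangle map with parameters $(\alpha,\beta)$ is $\phi(q,p)=(q+p+\alpha\theta(q)+\beta,\ p+\alpha\theta(q)+\beta)\pmod 1$; here $\beta=0$, so $\phi(q,p)=(q+p+\alpha\theta(q),\ p+\alpha\theta(q))\pmod 1$. *)

theory Defs
  imports Complex_Main
begin

text \<open>Points of the torus [0,1)^2 are represented as pairs of reals; reduction mod 1 is frac.\<close>

definition theta :: "real \<Rightarrow> real" where
  "theta q = (if q < 1/2 then 1 else -1)"

definition tri_map :: "real \<Rightarrow> real \<times> real \<Rightarrow> real \<times> real" where
  "tri_map \<alpha> x = (case x of (q, p) \<Rightarrow>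
     (frac (q + p + \<alpha> * theta q), frac (p + \<alpha> * theta q)))"

definition Lambda :: "nat \<Rightarrow> nat \<Rightarrow> real \<Rightarrow> (real \<times> real) set" where
  "Lambda n m p0 = {(q, frac (p0 + real k * (real n / real m))) | q k. 0 \<le> q \<and> q < 1 \<and> k < m}"

definition hseg :: "real \<Rightarrow> real \<Rightarrow> real \<Rightarrow> (real \<times> real) set" where
  "hseg a b c = {(q, c) | q. a \<le> q \<and> q < b}"

definition is_IET :: "(real \<times> real \<Rightarrow> real \<times> real) \<Rightarrow> (real \<times> real) set \<Rightarrow> bool" where
  "is_IET f S \<longleftrightarrow> bij_betw f S S \<and>
     (\<exists>P. finite P \<and> \<Union>P = S \<and> (\<forall>A\<in>P. \<forall>B\<in>P. A \<noteq> B \<longrightarrow> A \<inter> B = {}) \<and>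
        (\<forall>A\<in>P. \<exists>a b c s t. 0 \<le> a \<and> a < b \<and> b \<le> 1 \<and> A = hseg a b c \<and>
             (\<forall>q p. (q, p) \<in> A \<longrightarrow> f (q, p) = (frac (q + s), frac (p + t)))))"

end

theory Submission
  imports Defs
begin

(*
  The triangle map with beta = 0 only ever changes the height p of a point by
  +alpha or -alpha (mod 1), and then shifts q by the new height.  Hence:

  (i)  Every finite set H of heights in [0,1) that is closed under p \<mapsto> p +- alpha
       (mod 1) gives an invariant strip [0,1) x H on which the map is a bijection
       (it has an explicit inverse) and an interval exchange: on each half circle
       [0,1/2) x {c} and [1/2,1) x {c} it is a translation.  For alpha = n/m the
       heights of Lambda are such a set, because m alpha = n is an integer.
  (ii), (iii)  If m alpha is an integer and p lies on the grid p0 + Z/m, then after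
       i steps the height still lies in p0 + Z/m and the abscissa in q + i p0 + Z/m.
       A periodic point therefore forces k p0 \<in> Z/m, i.e. p0 rational.  Conversely,
       for p0 = a/b every orbit stays in a grid of mesh 1/(bm) in the unit square,
       which has at most (bm)^2 points; an injective map moving along such a finite
       orbit returns to its start after a period dividing (bm)^2!, uniformly in x.
*)

lemma theta_cases: "theta q = 1 \<or> theta q = -1"
  by (simp add: theta_def)

lemma tri_map_eq:
  "tri_map \<alpha> (q, p) = (frac (q + frac (p + \<alpha> * theta q)), frac (p + \<alpha> * theta q))"
  by (simp add: tri_map_def add.assoc)

(* Inverse of the triangle map on the unit square: recover q from q' - p', then undo the kick. *)
definition tri_inv :: "real \<Rightarrow> real \<times> real \<Rightarrow> real \<times> real" where
  "tri_inv \<alpha> y = (case y of (q', p') \<Rightarrow>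
     (frac (q' - p'), frac (p' - \<alpha> * theta (frac (q' - p')))))"

lemma frac_frac_diff: "frac (frac a - b) = frac (a - b)"
  by (metis diff_conv_add_uminus frac_add_simps(1))

lemma tri_inv_tri_map:
  assumes "q \<in> {0..<1}" "p \<in> {0..<1}"
  shows "tri_inv \<alpha> (tri_map \<alpha> (q, p)) = (q, p)"
proof -
  define p' where "p' = frac (p + \<alpha> * theta q)"
  have "frac (frac (q + p') - p') = q"
    using assms by (simp add: frac_frac_diff)
  moreover have "frac (p' - \<alpha> * theta q) = p"
    using assms by (simp add: p'_def frac_frac_diff)
  ultimately show ?thesis
    by (simp add: tri_map_eq tri_inv_def p'_def)
qed

lemma tri_map_tri_inv:
  assumes "q \<in> {0..<1}" "p \<in> {0..<1}"
  shows "tri_map \<alpha> (tri_inv \<alpha> (q, p)) = (q, p)"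
proof -
  define r where "r = frac (q - p)"
  have "frac (frac (p - \<alpha> * theta r) + \<alpha> * theta r) = p"
    using assms by (simp add: frac_eq)
  moreover have "frac (r + p) = q"
    using assms by (simp add: r_def frac_eq)
  ultimately show ?thesis
    by (simp add: tri_map_eq tri_inv_def flip: r_def)
qed

definition closed_under_shift :: "real \<Rightarrow> real set \<Rightarrow> bool" where
  "closed_under_shift \<alpha> H \<longleftrightarrow> (\<forall>h\<in>H. frac (h + \<alpha>) \<in> H \<and> frac (h - \<alpha>) \<in> H)"

lemma shift_theta_mem:
  assumes "closed_under_shift \<alpha> H" "h \<in> H"
  shows "frac (h + \<alpha> * theta q) \<in> H" "frac (h - \<alpha> * theta q) \<in> H"
  using assms theta_cases[of q] by (auto simp: closed_under_shift_def)

lemma tri_map_bij_strip: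
  assumes "H \<subseteq> {0..<1}" "closed_under_shift \<alpha> H"
  shows "bij_betw (tri_map \<alpha>) ({0..<1} \<times> H) ({0..<1} \<times> H)"
proof (rule bij_betw_byWitness[where f' = "tri_inv \<alpha>"])
  show "\<forall>x \<in> {0..<1} \<times> H. tri_inv \<alpha> (tri_map \<alpha> x) = x"
    using assms(1) tri_inv_tri_map by fastforce
  show "\<forall>x \<in> {0..<1} \<times> H. tri_map \<alpha> (tri_inv \<alpha> x) = x"
    using assms(1) tri_map_tri_inv by fastforce
  show "tri_map \<alpha> ` ({0..<1} \<times> H) \<subseteq> {0..<1} \<times> H"
    using shift_theta_mem[OF assms(2)] by (auto simp: tri_map_eq frac_lt_1)
  show "tri_inv \<alpha> ` ({0..<1} \<times> H) \<subseteq> {0..<1} \<times> H"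
  proof -
    have "tri_inv \<alpha> (q, h) \<in> {0..<1} \<times> H" if "h \<in> H" for q h
      using shift_theta_mem(2)[OF assms(2) that] by (simp add: tri_inv_def frac_lt_1)
    then show ?thesis unfolding image_subset_iff by blast
  qed
qed

lemma tri_map_left_half:
  "q < 1/2 \<Longrightarrow> tri_map \<alpha> (q, c) = (frac (q + (c + \<alpha>)), frac (c + \<alpha>))"
  by (simp add: tri_map_def theta_def add.assoc)

lemma tri_map_right_half:
  "\<not> q < 1/2 \<Longrightarrow> tri_map \<alpha> (q, c) = (frac (q + (c - \<alpha>)), frac (c - \<alpha>))"
  by (simp add: tri_map_def theta_def add.assoc)

lemma tri_map_IET_strip:
  assumes "finite H" "H \<subseteq> {0..<1}" "closed_under_shift \<alpha> H"
  shows "is_IET (tri_map \<alpha>) ({0..<1} \<times> H)"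
proof -
  define P where "P = (\<lambda>c. hseg 0 (1/2) c) ` H \<union> (\<lambda>c. hseg (1/2) 1 c) ` H"
  have "finite P"
    using assms(1) by (simp add: P_def)
  moreover have "\<Union>P = {0..<1} \<times> H"
  proof
    show "\<Union>P \<subseteq> {0..<1} \<times> H"
      by (auto simp: P_def hseg_def)
    show "{0..<1} \<times> H \<subseteq> \<Union>P"
    proof clarify
      fix q c :: real assume "q \<in> {0..<1}" "c \<in> H"
      then have "(q, c) \<in> hseg 0 (1/2) c \<or> (q, c) \<in> hseg (1/2) 1 c"
        by (auto simp: hseg_def)
      then show "(q, c) \<in> \<Union>P"
        using \<open>c \<in> H\<close> by (auto simp: P_def)
    qed
  qed
  moreover have "\<forall>A\<in>P. \<forall>B\<in>P. A \<noteq> B \<longrightarrow> A \<inter> B = {}"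
    by (auto simp: P_def hseg_def)
  moreover have "\<exists>a b c s t. 0 \<le> a \<and> a < b \<and> b \<le> 1 \<and> A = hseg a b c \<and>
      (\<forall>q p. (q, p) \<in> A \<longrightarrow> tri_map \<alpha> (q, p) = (frac (q + s), frac (p + t)))" if "A \<in> P" for A
  proof -
    obtain c where "A = hseg 0 (1/2) c \<or> A = hseg (1/2) 1 c"
      using \<open>A \<in> P\<close> by (auto simp: P_def)
    then show ?thesis
    proof
      assume A: "A = hseg 0 (1/2) c"
      have "tri_map \<alpha> (q, p) = (frac (q + (c + \<alpha>)), frac (p + \<alpha>))" if "(q, p) \<in> A" for q p
        using that tri_map_left_half[of q \<alpha> c] by (auto simp: A hseg_def)
      then show ?thesis
        using A by (intro exI[of _ 0] exI[of _ "1/2"] exI[of _ c] exI[of _ "c + \<alpha>"] exI[of _ \<alpha>]) simp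
    next
      assume A: "A = hseg (1/2) 1 c"
      have "tri_map \<alpha> (q, p) = (frac (q + (c - \<alpha>)), frac (p + - \<alpha>))" if "(q, p) \<in> A" for q p
        using that tri_map_right_half[of q \<alpha> c] by (auto simp: A hseg_def)
      then show ?thesis
        using A by (intro exI[of _ "1/2"] exI[of _ 1] exI[of _ c] exI[of _ "c - \<alpha>"] exI[of _ "- \<alpha>"]) simp
    qed
  qed
  ultimately show ?thesis
    unfolding is_IET_def using tri_map_bij_strip[OF assms(2,3)] by (intro conjI exI[of _ P]) auto
qed

definition heights :: "nat \<Rightarrow> nat \<Rightarrow> real \<Rightarrow> real set" where
  "heights n m p0 = (\<lambda>k. frac (p0 + real k * (real n / real m))) ` {..<m}"

lemma Lambda_eq_strip: "Lambda n m p0 = {0..<1} \<times> heights n m p0"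
  by (auto simp: Lambda_def heights_def)

lemma heights_in_unit_interval: "heights n m p0 \<subseteq> {0..<1}"
  by (auto simp: heights_def frac_lt_1)

lemma finite_heights: "finite (heights n m p0)"
  by (simp add: heights_def)

(* Any multiple of alpha = n/m added to p0 lands on one of these heights, since
   m alpha is an integer. *)
lemma height_mem:
  assumes "m > 0"
  shows "frac (p0 + real j * (real n / real m)) \<in> heights n m p0"
proof -
  have "real j = real (j mod m) + real (j div m) * real m"
    by (metis mod_div_mult_eq of_nat_add of_nat_mult)
  then have "p0 + real j * (real n / real m)
      = p0 + real (j mod m) * (real n / real m) + of_int (int (j div m * n))"
    using assms by (simp add: field_simps)
  then have "frac (p0 + real j * (real n / real m)) = frac (p0 + real (j mod m) * (real n / real m))"
    by (simp only: frac_add_of_int_right)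
  then show ?thesis
    using assms by (auto simp: heights_def)
qed

lemma heights_closed:
  assumes "m > 0"
  shows "closed_under_shift (real n / real m) (heights n m p0)"
  unfolding closed_under_shift_def
proof
  fix h assume "h \<in> heights n m p0"
  then obtain k where k: "h = frac (p0 + real k * (real n / real m))"
    by (auto simp: heights_def)
  have "p0 + real k * (real n / real m) + real n / real m = p0 + real (k + 1) * (real n / real m)"
    by (simp add: add_divide_distrib algebra_simps)
  then have "frac (h + real n / real m) = frac (p0 + real (k + 1) * (real n / real m))"
    by (simp only: k frac_add_simps)
  moreover have "p0 + real k * (real n / real m) - real n / real m
      = p0 + real (k + m - 1) * (real n / real m) + of_int (- int n)"
    using assms by (simp add: of_nat_diff field_simps)
  then have "frac (h - real n / real m) = frac (p0 + real (k + m - 1) * (real n / real m))"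
    by (simp only: k frac_frac_diff frac_add_of_int_right)
  ultimately show "frac (h + real n / real m) \<in> heights n m p0 \<and> frac (h - real n / real m) \<in> heights n m p0"
    using height_mem[OF assms] by (simp only:)
qed

(* x lies in the coset c + Z/D of the lattice Z/D. *)
definition on_grid :: "nat \<Rightarrow> real \<Rightarrow> real \<Rightarrow> bool" where
  "on_grid D c x \<longleftrightarrow> real D * (x - c) \<in> \<int>"

lemma on_grid_refl: "on_grid D c c"
  by (simp add: on_grid_def)

lemma on_grid_add:
  assumes "on_grid D c x" "on_grid D d y"
  shows "on_grid D (c + d) (x + y)"
proof -
  have "real D * ((x + y) - (c + d)) = real D * (x - c) + real D * (y - d)"
    by (simp add: algebra_simps)
  then show ?thesis
    using assms by (simp add: on_grid_def)
qed

lemma on_grid_frac: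
  assumes "on_grid D c x"
  shows "on_grid D c (frac x)"
proof -
  have "real D * (frac x - c) = real D * (x - c) - real D * of_int \<lfloor>x\<rfloor>"
    by (simp add: frac_def algebra_simps)
  then show ?thesis
    using assms by (simp add: on_grid_def)
qed

lemma on_grid_refine:
  assumes "on_grid D c x"
  shows "on_grid (k * D) c x"
proof -
  have "real (k * D) * (x - c) = real k * (real D * (x - c))"
    by simp
  then show ?thesis
    unfolding on_grid_def using Ints_mult[OF Ints_of_nat assms[unfolded on_grid_def]]
    by (simp add: mult.assoc)
qed

lemma on_grid_shift:
  assumes "on_grid D (c + d) x" "real D * d \<in> \<int>"
  shows "on_grid D c x"
proof -
  have "real D * (x - c) = real D * (x - (c + d)) + real D * d"
    by (simp add: algebra_simps)
  then show ?thesis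
    using assms by (simp add: on_grid_def)
qed

lemma on_grid_points_in_unit_interval:
  fixes D :: nat and c :: real
  assumes "D > 0"
  defines "l \<equiv> \<lceil>- real D * c\<rceil>"
  shows "{x. 0 \<le> x \<and> x < 1 \<and> on_grid D c x} \<subseteq> (\<lambda>j. c + of_int j / real D) ` {l..<l + int D}"
proof
  fix x assume x: "x \<in> {x. 0 \<le> x \<and> x < 1 \<and> on_grid D c x}"
  then obtain j where j: "real D * (x - c) = of_int j"
    by (auto simp: on_grid_def elim: Ints_cases)
  have "0 \<le> x * real D" "x * real D < real D"
    using x assms(1) by simp_all
  then have lower: "- real D * c \<le> of_int j" and upper: "of_int j < real D - real D * c"
    using j by (simp_all add: algebra_simps)
  have "of_int j < real_of_int l + real D"
    using upper le_of_int_ceiling[of "- real D * c"] unfolding l_def by linarith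
  then have "j < l + int D"
    by (metis of_int_add of_int_less_iff of_int_of_nat_eq)
  moreover have "l \<le> j"
    using lower unfolding l_def by (simp add: ceiling_le)
  ultimately have "j \<in> {l..<l + int D}"
    by simp
  moreover have "x = c + of_int j / real D"
    using assms(1) j[symmetric] by (simp add: field_simps)
  ultimately show "x \<in> (\<lambda>j. c + of_int j / real D) ` {l..<l + int D}"
    by blast
qed

lemma on_grid_points_card:
  assumes "D > 0"
  shows "finite {x. 0 \<le> x \<and> x < 1 \<and> on_grid D c x}" "card {x. 0 \<le> x \<and> x < 1 \<and> on_grid D c x} \<le> D"
proof -
  let ?l = "\<lceil>- real D * c\<rceil>"
  have "card ((\<lambda>j. c + of_int j / real D) ` {?l..<?l + int D}) \<le> D"
    using card_image_le[of "{?l..<?l + int D}" "\<lambda>j. c + of_int j / real D"] by simp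
  then show "finite {x. 0 \<le> x \<and> x < 1 \<and> on_grid D c x}" "card {x. 0 \<le> x \<and> x < 1 \<and> on_grid D c x} \<le> D"
    using on_grid_points_in_unit_interval[OF assms] finite_subset card_mono
    by (metis (no_types, lifting) finite_atLeastLessThan_int finite_imageI order_trans)+
qed

lemma heights_on_grid:
  assumes "m > 0" "h \<in> heights n m p0"
  shows "on_grid m p0 h"
proof -
  obtain k where h: "h = frac (p0 + real k * (real n / real m))"
    using assms(2) by (auto simp: heights_def)
  have "on_grid m p0 (p0 + real k * (real n / real m))"
    using assms(1) by (simp add: on_grid_def)
  then show ?thesis
    unfolding h by (rule on_grid_frac)
qed

lemma tri_map_orbit_on_grid:
  assumes "real m * \<alpha> \<in> \<int>" "on_grid m p0 p"
  shows "on_grid m p0 (snd ((tri_map \<alpha> ^^ i) (q, p)))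
       \<and> on_grid m (q + real i * p0) (fst ((tri_map \<alpha> ^^ i) (q, p)))"
proof (induction i)
  case 0
  then show ?case
    using assms(2) by (simp add: on_grid_refl)
next
  case (Suc i)
  obtain q' p' where qp: "(tri_map \<alpha> ^^ i) (q, p) = (q', p')"
    by fastforce
  have "on_grid m 0 (\<alpha> * theta q')"
    using assms(1) theta_cases[of q'] by (auto simp: on_grid_def)
  then have p'': "on_grid m p0 (frac (p' + \<alpha> * theta q'))"
    using Suc.IH qp on_grid_add[of m p0 p' 0] by (simp add: on_grid_frac)
  have "on_grid m (q + real i * p0) q'"
    using Suc.IH qp by simp
  then have "on_grid m (q + real i * p0 + p0) (frac (q' + frac (p' + \<alpha> * theta q')))"
    using on_grid_frac on_grid_add p'' by blast
  moreover have "q + real (Suc i) * p0 = q + real i * p0 + p0"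
    by (simp add: algebra_simps)
  ultimately show ?case
    using p'' qp by (simp add: tri_map_eq add.assoc)
qed

(* Part (iii): returning to q after k steps forces k p0 \<in> Z/m. *)
lemma periodic_point_forces_rational:
  assumes "m > 0" "real m * \<alpha> \<in> \<int>" "on_grid m p0 p"
    and "k \<ge> 1" "(tri_map \<alpha> ^^ k) (q, p) = (q, p)"
  shows "p0 \<in> \<rat>"
proof -
  have "on_grid m (q + real k * p0) q"
    using tri_map_orbit_on_grid[OF assms(2,3), of k q] assms(5) by simp
  then have "real m * (q - (q + real k * p0)) \<in> \<int>"
    unfolding on_grid_def .
  then obtain z where "real m * (q - (q + real k * p0)) = of_int z"
    by (rule Ints_cases)
  then have "p0 = - of_int z / (real m * real k)"
    using assms(1,4) by (simp add: field_simps)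
  then show ?thesis
    by simp
qed

lemma sequence_in_small_set_repeats:
  assumes "finite G" "card G \<le> N" "\<And>i. g i \<in> G"
  shows "\<exists>i j. i < j \<and> j \<le> N \<and> g i = g j"
proof -
  have "\<not> inj_on g {0..N}"
  proof
    assume "inj_on g {0..N}"
    then have "card {0..N} \<le> card G"
      using assms(1,3) by (intro card_inj_on_le) auto
    then show False
      using assms(2) by simp
  qed
  then obtain i j where "i \<le> N" "j \<le> N" "i \<noteq> j" "g i = g j"
    unfolding inj_on_def by auto
  then show ?thesis
    by (metis linorder_neq_iff)
qed

lemma funpow_periodic_multiple: "(f ^^ d) x = x \<Longrightarrow> (f ^^ (d * c)) x = x"
proof -
  assume period: "(f ^^ d) x = x"
  have "((f ^^ d) ^^ c) x = x"
    by (induction c) (simp_all add: period)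
  then show ?thesis
    by (simp add: funpow_mult)
qed

lemma bij_orbit_periodic:
  assumes "bij_betw f S S" "x \<in> S" "finite G" "card G \<le> N" "\<And>i. (f ^^ i) x \<in> G"
  shows "(f ^^ fact N) x = x"
proof -
  obtain i j where ij: "i < j" "j \<le> N" "(f ^^ i) x = (f ^^ j) x"
    using sequence_in_small_set_repeats[OF assms(3,4), of "\<lambda>i. (f ^^ i) x"] assms(5) by blast
  define d where "d = j - i"
  have "(f ^^ i) ((f ^^ d) x) = (f ^^ (i + d)) x"
    by (simp add: funpow_add)
  also have "\<dots> = (f ^^ i) x"
    using ij by (simp add: d_def)
  finally have "(f ^^ i) ((f ^^ d) x) = (f ^^ i) x" .
  moreover have "(f ^^ d) x \<in> S"
    using bij_betw_apply[OF bij_betw_funpow[OF assms(1)] assms(2)] .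
  ultimately have "(f ^^ d) x = x"
    using bij_betw_imp_inj_on[OF bij_betw_funpow[OF assms(1)], of i] assms(2)
    by (auto simp: inj_on_def)
  moreover have "d dvd fact N"
    using ij by (auto simp: d_def intro: dvd_fact)
  ultimately show ?thesis
    by (metis dvdE funpow_periodic_multiple)
qed

(* Part (ii): for rational p0 = a/b every orbit in the unit square stays on the grid
   (q + Z/(bm)) x (p0 + Z/(bm)), with at most (bm)^2 points, so (bm)^2! is a
   common period. *)
lemma rational_height_uniform_period:
  assumes "m > 0" "real m * \<alpha> \<in> \<int>" "p0 \<in> \<rat>"
    and "bij_betw (tri_map \<alpha>) S S" "S \<subseteq> {0..<1} \<times> {0..<1}" "\<And>x. x \<in> S \<Longrightarrow> on_grid m p0 (snd x)"
  shows "\<exists>k \<ge> 1. \<forall>x \<in> S. (tri_map \<alpha> ^^ k) x = x"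
proof -
  obtain a b :: int where ab: "b > 0" "p0 = of_int a / of_int b"
    using Rats_cases'[OF assms(3)] by blast
  define D where "D = nat b * m"
  have "D > 0"
    using ab(1) assms(1) by (simp add: D_def)
  define G where "G c = {y. 0 \<le> y \<and> y < 1 \<and> on_grid D c y}" for c
  have period: "(tri_map \<alpha> ^^ fact (D * D)) x = x" if "x \<in> S" for x
  proof -
    obtain q p where x: "x = (q, p)"
      by fastforce
    have "(tri_map \<alpha> ^^ i) x \<in> G q \<times> G p0" for i
    proof -
      have "real D = of_int b * real m"
        using ab(1) by (simp add: D_def)
      then have "real D * (real i * p0) = of_int (int i * a * int m)"
        using ab by (simp add: field_simps)
      then have "real D * (real i * p0) \<in> \<int>"
        by (simp only: Ints_of_int)
      moreover have "on_grid m p0 (snd ((tri_map \<alpha> ^^ i) x))"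
        "on_grid m (q + real i * p0) (fst ((tri_map \<alpha> ^^ i) x))"
        using tri_map_orbit_on_grid[OF assms(2) assms(6)[OF that], of i q] x by simp_all
      ultimately have "on_grid D p0 (snd ((tri_map \<alpha> ^^ i) x))"
        "on_grid D q (fst ((tri_map \<alpha> ^^ i) x))"
        unfolding D_def by (auto intro: on_grid_refine on_grid_shift)
      moreover have "(tri_map \<alpha> ^^ i) x \<in> {0..<1} \<times> {0..<1}"
        using bij_betw_apply[OF bij_betw_funpow[OF assms(4)] that] assms(5) by blast
      ultimately show ?thesis
        unfolding G_def by (simp add: mem_Times_iff)
    qed
    moreover have "finite (G q \<times> G p0)" "card (G q \<times> G p0) \<le> D * D"
      using on_grid_points_card[OF \<open>D > 0\<close>] unfolding G_def
      by (simp_all add: card_cartesian_product mult_le_mono)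
    ultimately show ?thesis
      using bij_orbit_periodic[OF assms(4) that] by blast
  qed
  then show ?thesis
    using fact_ge_1[of "D * D"] by (intro exI[of _ "fact (D * D)"]) auto
qed

theorem lemma2:
  fixes n m :: nat and p0 :: real
  assumes "n > 0" and "m > 0" and "coprime n m"
    and "0 \<le> p0" and "p0 < 1"
  shows "tri_map (real n / real m) ` Lambda n m p0 = Lambda n m p0
     \<and> is_IET (tri_map (real n / real m)) (Lambda n m p0)
     \<and> (p0 \<in> \<rat> \<longrightarrow> (\<exists>k::nat. k \<ge> 1 \<and>
          (\<forall>x\<in>Lambda n m p0. (tri_map (real n / real m) ^^ k) x = x)))
     \<and> (p0 \<notin> \<rat> \<longrightarrow> \<not> (\<exists>x\<in>Lambda n m p0. \<exists>k::nat. k \<ge> 1 \<and>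
          (tri_map (real n / real m) ^^ k) x = x))"
proof -
  let ?\<alpha> = "real n / real m"
  have closed: "closed_under_shift ?\<alpha> (heights n m p0)"
    using heights_closed[OF assms(2)] .
  have bij: "bij_betw (tri_map ?\<alpha>) (Lambda n m p0) (Lambda n m p0)"
    unfolding Lambda_eq_strip using tri_map_bij_strip[OF heights_in_unit_interval closed] .
  have IET: "is_IET (tri_map ?\<alpha>) (Lambda n m p0)"
    unfolding Lambda_eq_strip using tri_map_IET_strip[OF finite_heights heights_in_unit_interval closed] .
  have m_alpha: "real m * ?\<alpha> \<in> \<int>"
    using assms(2) by simp
  have grid: "on_grid m p0 (snd x)" if "x \<in> Lambda n m p0" for x
    using that heights_on_grid[OF assms(2)] by (auto simp: Lambda_eq_strip)
  have unit_square: "Lambda n m p0 \<subseteq> {0..<1} \<times> {0..<1}"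
    unfolding Lambda_eq_strip using heights_in_unit_interval by auto
  have "p0 \<in> \<rat> \<Longrightarrow> \<exists>k \<ge> 1. \<forall>x \<in> Lambda n m p0. (tri_map ?\<alpha> ^^ k) x = x"
    using rational_height_uniform_period[OF assms(2) m_alpha _ bij unit_square grid] .
  moreover have "p0 \<in> \<rat>" if "x \<in> Lambda n m p0" "k \<ge> 1" "(tri_map ?\<alpha> ^^ k) x = x" for x k
    using periodic_point_forces_rational[OF assms(2) m_alpha grid[OF that(1)] that(2)] that(3)
    by (metis prod.collapse)
  ultimately show ?thesis
    using bij_betw_imp_surj_on[OF bij] IET by blast
qed

end
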